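(* For every positive integer $n$, the Aztec diamond $\operatorname{AD}(n)$ (with no defects) has a cover by L-trominoes if and only if $n(n+1)\equiv 0 \pmod 3$.
   Context: A cell is a unit square $[i,i+1]\times[j,j+1]$ with $i,j\in\mathbb{Z}$, labelled $(i,j)$. An L-tromino is a set of three cells equal to a $2\times 2$ block of cells with one cell removed. A cover of a region $R$ (a finite edge-connected set of cells) is a set of pairwise disjoint L-trominoes contained in $R$ whose union is $R$. The Aztec diamond of order $n$, $\operatorname{AD}(n)$, is the union of the cells $[a,a+1]\times[b,b+1]$, $a,b\in\mathbb{Z}$, lying completely inside $\{(x,y): |x|+|y|\le n+1\}$; it has $2n(n+1)$ cells. *)

theory Defs
  imports Main
begin

text \<open>A cell (i,j) is the unit square [i,i+1] x [j,j+1].\<close>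
type_synonym cell = "int \<times> int"

definition block2 :: "cell \<Rightarrow> cell set" where
  "block2 c = {(fst c + di, snd c + dj) | di dj. di \<in> {0,1} \<and> dj \<in> {0,1}}"

definition L_tromino :: "cell set \<Rightarrow> bool" where
  "L_tromino T \<longleftrightarrow> (\<exists>c r. r \<in> block2 c \<and> T = block2 c - {r})"

definition is_cover :: "cell set set \<Rightarrow> cell set \<Rightarrow> bool" where
  "is_cover C R \<longleftrightarrow> (\<forall>T\<in>C. L_tromino T \<and> T \<subseteq> R)
     \<and> (\<forall>T\<in>C. \<forall>T'\<in>C. T \<noteq> T' \<longrightarrow> T \<inter> T' = {})
     \<and> \<Union>C = R"

text \<open>Cell (a,b) lies completely inside {|x|+|y| <= n+1}; since the region is convex,
  this holds iff all four corners of the square lie in it.\<close>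
definition aztec_diamond :: "nat \<Rightarrow> cell set" where
  "aztec_diamond n = {(a,b). \<forall>x\<in>{a, a+1}. \<forall>y\<in>{b, b+1}. \<bar>x\<bar> + \<bar>y\<bar> \<le> int n + 1}"

end

theory Submission
  imports Defs
begin

text \<open>
  Necessity is a count: a cover by trominoes has a multiple of 3 cells, while \<open>AD(n)\<close> has
  \<open>2n(n+1)\<close> cells, so 3 divides \<open>n(n+1)\<close>.

  For sufficiency, \<open>AD(n)\<close> is the union of the four images of the staircase
  \<open>{a, b \<ge> 0, a + b < n}\<close> under the reflections in the two axes, and \<open>AD(n+3) - AD(n)\<close> is the
  union of the four images of the band \<open>{a, b \<ge> 0, n \<le> a + b \<le> n + 2}\<close>. A band starting at an
  odd diagonal is tiled by repeatedly peeling two trominoes off its bottom two rows. The band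
  at level \<open>n\<close> is such a band once its bottom row (\<open>n\<close> even), or its bottom row and left
  column (\<open>n\<close> odd), are removed, and these combine with their mirror images into \<open>3 \<times> 2\<close> and
  \<open>2 \<times> 3\<close> rectangles. As \<open>AD(0)\<close> is empty and \<open>AD(2)\<close> consists of the four mirror images of
  one L-tromino, induction in steps of 3 tiles \<open>AD(n)\<close> whenever \<open>n mod 3 \<noteq> 1\<close>.
\<close>

definition tileable :: "cell set \<Rightarrow> bool" where
  "tileable R \<longleftrightarrow> (\<exists>C. is_cover C R)"

lemma block2_mem:
  "p \<in> block2 c \<longleftrightarrow> (fst p = fst c \<or> fst p = fst c + 1) \<and> (snd p = snd c \<or> snd p = snd c + 1)"
  by (cases p; cases c) (auto simp: block2_def)

lemma tileable_empty: "tileable {}"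
  unfolding tileable_def is_cover_def by auto

lemma tileable_L_tromino: "L_tromino T \<Longrightarrow> tileable T"
  unfolding tileable_def is_cover_def by (rule exI[of _ "{T}"]) auto

lemma tileable_block2_Diff: "r \<in> block2 c \<Longrightarrow> tileable (block2 c - {r})"
  by (rule tileable_L_tromino) (unfold L_tromino_def, blast)

lemma tileable_Un:
  assumes "tileable A" "tileable B" "A \<inter> B = {}"
  shows "tileable (A \<union> B)"
proof -
  from assms obtain CA CB where "is_cover CA A" "is_cover CB B"
    unfolding tileable_def by blast
  moreover have "T \<inter> T' = {}" if "T \<in> CA" "T' \<in> CB" for T T'
    using that \<open>is_cover CA A\<close> \<open>is_cover CB B\<close> \<open>A \<inter> B = {}\<close>
    unfolding is_cover_def by blast
  ultimately have "is_cover (CA \<union> CB) (A \<union> B)"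
    unfolding is_cover_def by (metis Int_commute Un_iff Union_Un_distrib le_supI1 le_supI2)
  then show ?thesis unfolding tileable_def by blast
qed

lemma L_tromino_vimage:
  assumes "bij g" and block2_vimage: "\<And>c. \<exists>c'. g -` block2 c = block2 c'" and "L_tromino T"
  shows "L_tromino (g -` T)"
proof -
  from \<open>L_tromino T\<close> obtain c r where "r \<in> block2 c" and T: "T = block2 c - {r}"
    unfolding L_tromino_def by blast
  obtain c' where c': "g -` block2 c = block2 c'" using block2_vimage by blast
  have g_inv: "g (inv g r) = r"
    using \<open>bij g\<close> by (simp add: bij_is_surj surj_f_inv_f)
  have "g -` {r} = {inv g r}"
    using bij_inv_eq_iff[OF \<open>bij g\<close>] by blast
  then have "g -` T = block2 c' - {inv g r}"
    unfolding T c'[symmetric] by blast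
  moreover have "inv g r \<in> block2 c'"
    unfolding c'[symmetric] using g_inv \<open>r \<in> block2 c\<close> by simp
  ultimately show ?thesis unfolding L_tromino_def by blast
qed

lemma tileable_vimage:
  assumes "bij g" "\<And>c. \<exists>c'. g -` block2 c = block2 c'" "tileable R"
  shows "tileable (g -` R)"
proof -
  from \<open>tileable R\<close> obtain C where C: "is_cover C R" unfolding tileable_def by blast
  have "\<forall>T\<in>C. \<forall>T'\<in>C. g -` T \<noteq> g -` T' \<longrightarrow> g -` T \<inter> g -` T' = {}"
    using C unfolding is_cover_def by (metis vimage_Int vimage_empty)
  moreover have "\<forall>T\<in>C. L_tromino (g -` T) \<and> g -` T \<subseteq> g -` R"
    using C L_tromino_vimage[OF assms(1,2)] unfolding is_cover_def by blast
  moreover have "\<Union>((-`) g ` C) = g -` R"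
    using C unfolding is_cover_def by blast
  ultimately have "is_cover ((-`) g ` C) (g -` R)"
    unfolding is_cover_def by auto
  then show ?thesis unfolding tileable_def by blast
qed

definition shift :: "int \<Rightarrow> int \<Rightarrow> cell \<Rightarrow> cell" where
  "shift c d p = (fst p + c, snd p + d)"

text \<open>Cell \<open>(a, b)\<close> is the square \<open>[a, a+1] \<times> [b, b+1]\<close>, so the reflection in the line
  \<open>x = 0\<close> maps it to cell \<open>(-1 - a, b)\<close>.\<close>

definition flip_x :: "cell \<Rightarrow> cell" where
  "flip_x p = (- 1 - fst p, snd p)"

definition flip_y :: "cell \<Rightarrow> cell" where
  "flip_y p = (fst p, - 1 - snd p)"

lemma bij_shift: "bij (shift c d)"
  by (rule o_bij[of "shift (- c) (- d)"]) (auto simp: shift_def fun_eq_iff)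

lemma bij_flip_x: "bij flip_x"
  by (rule o_bij[of flip_x]) (auto simp: flip_x_def fun_eq_iff)

lemma bij_flip_y: "bij flip_y"
  by (rule o_bij[of flip_y]) (auto simp: flip_y_def fun_eq_iff)

lemma tileable_vimage_shift: "tileable R \<Longrightarrow> tileable (shift c d -` R)"
proof (rule tileable_vimage)
  show "bij (shift c d)" by (rule bij_shift)
  show "\<exists>c'. shift c d -` block2 p = block2 c'" for p
    by (rule exI[of _ "(fst p - c, snd p - d)"]) (auto simp: shift_def block2_mem)
qed

lemma tileable_vimage_flip_x: "tileable R \<Longrightarrow> tileable (flip_x -` R)"
proof (rule tileable_vimage)
  show "bij flip_x" by (rule bij_flip_x)
  show "\<exists>c'. flip_x -` block2 p = block2 c'" for p
    by (rule exI[of _ "(- 2 - fst p, snd p)"]) (auto simp: flip_x_def block2_mem)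
qed

lemma tileable_vimage_flip_y: "tileable R \<Longrightarrow> tileable (flip_y -` R)"
proof (rule tileable_vimage)
  show "bij flip_y" by (rule bij_flip_y)
  show "\<exists>c'. flip_y -` block2 p = block2 c'" for p
    by (rule exI[of _ "(fst p, - 2 - snd p)"]) (auto simp: flip_y_def block2_mem)
qed

lemma Int_vimage_flip_x:
  assumes "S \<subseteq> {p. 0 \<le> fst p}"
  shows "S \<inter> flip_x -` S = {}"
proof -
  have "flip_x -` S \<subseteq> {p. fst p < 0}"
    using assms unfolding flip_x_def by force
  moreover have "{p. 0 \<le> fst p} \<inter> {p. fst p < 0} = ({} :: cell set)"
    by auto
  ultimately show ?thesis using assms by blast
qed

lemma Int_vimage_flip_y:
  assumes "S \<subseteq> {p. 0 \<le> snd p}"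
  shows "S \<inter> flip_y -` S = {}"
proof -
  have "flip_y -` S \<subseteq> {p. snd p < 0}"
    using assms unfolding flip_y_def by force
  moreover have "{p. 0 \<le> snd p} \<inter> {p. snd p < 0} = ({} :: cell set)"
    by auto
  ultimately show ?thesis using assms by blast
qed

definition mirror_x :: "cell set \<Rightarrow> cell set" where
  "mirror_x S = S \<union> flip_x -` S"

definition mirror_y :: "cell set \<Rightarrow> cell set" where
  "mirror_y S = S \<union> flip_y -` S"

lemma mirror_x_Un: "mirror_x (A \<union> B) = mirror_x A \<union> mirror_x B"
  by (auto simp: mirror_x_def)

lemma mirror_y_Un: "mirror_y (A \<union> B) = mirror_y A \<union> mirror_y B"
  by (auto simp: mirror_y_def)

lemma mirror_x_mirror_y_commute: "mirror_x (mirror_y S) = mirror_y (mirror_x S)"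
  by (auto simp: mirror_x_def mirror_y_def flip_x_def flip_y_def)

lemma mirror_y_subset_right_half:
  "S \<subseteq> {p. 0 \<le> fst p} \<Longrightarrow> mirror_y S \<subseteq> {p. 0 \<le> fst p}"
  by (auto simp: mirror_y_def flip_y_def)

lemma tileable_mirror_x:
  assumes "tileable S" "S \<subseteq> {p. 0 \<le> fst p}"
  shows "tileable (mirror_x S)"
proof -
  have "S \<inter> flip_x -` S = {}"
    using assms(2) by (rule Int_vimage_flip_x)
  then show ?thesis
    unfolding mirror_x_def using assms(1) by (intro tileable_Un tileable_vimage_flip_x)
qed

lemma tileable_mirror_y:
  assumes "tileable S" "S \<subseteq> {p. 0 \<le> snd p}"
  shows "tileable (mirror_y S)"
proof -
  have "S \<inter> flip_y -` S = {}"
    using assms(2) by (rule Int_vimage_flip_y)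
  then show ?thesis
    unfolding mirror_y_def using assms(1) by (intro tileable_Un tileable_vimage_flip_y)
qed

lemma card_mirror_x:
  assumes "finite S" "S \<subseteq> {p. 0 \<le> fst p}"
  shows "card (mirror_x S) = 2 * card S"
proof -
  have "card (flip_x -` S) = card S" "finite (flip_x -` S)"
    using bij_flip_x \<open>finite S\<close> by (auto simp: bij_def card_vimage_inj finite_vimageI)
  moreover have "S \<inter> flip_x -` S = {}"
    using assms(2) by (rule Int_vimage_flip_x)
  ultimately show ?thesis
    using \<open>finite S\<close> by (simp add: mirror_x_def card_Un_disjoint)
qed

lemma card_mirror_y:
  assumes "finite S" "S \<subseteq> {p. 0 \<le> snd p}"
  shows "card (mirror_y S) = 2 * card S"
proof -
  have "card (flip_y -` S) = card S" "finite (flip_y -` S)"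
    using bij_flip_y \<open>finite S\<close> by (auto simp: bij_def card_vimage_inj finite_vimageI)
  moreover have "S \<inter> flip_y -` S = {}"
    using assms(2) by (rule Int_vimage_flip_y)
  ultimately show ?thesis
    using \<open>finite S\<close> by (simp add: mirror_y_def card_Un_disjoint)
qed

lemma mirror_x_disjoint:
  assumes "A \<inter> B = {}" "A \<union> B \<subseteq> {p. 0 \<le> fst p}"
  shows "mirror_x A \<inter> mirror_x B = {}"
  using Int_vimage_flip_x[OF assms(2)] assms(1) unfolding mirror_x_def by blast

lemma mirror_y_disjoint:
  assumes "A \<inter> B = {}" "A \<union> B \<subseteq> {p. 0 \<le> snd p}"
  shows "mirror_y A \<inter> mirror_y B = {}"
  using Int_vimage_flip_y[OF assms(2)] assms(1) unfolding mirror_y_def by blast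

definition triangle :: "nat \<Rightarrow> cell set" where
  "triangle n = {p. 0 \<le> fst p \<and> 0 \<le> snd p \<and> fst p + snd p < int n}"

definition band :: "int \<Rightarrow> cell set" where
  "band m = {p. 0 \<le> fst p \<and> 0 \<le> snd p \<and> m \<le> fst p + snd p \<and> fst p + snd p \<le> m + 2}"

lemma aztec_diamond_mem:
  "p \<in> aztec_diamond n \<longleftrightarrow> \<bar>2 * fst p + 1\<bar> + \<bar>2 * snd p + 1\<bar> \<le> 2 * int n"
  by (cases p) (auto simp: aztec_diamond_def abs_if)

lemma aztec_diamond_eq_mirror: "aztec_diamond n = mirror_x (mirror_y (triangle n))"
proof (rule set_eqI)
  fix p :: cell
  obtain a b where p: "p = (a, b)" by (cases p)
  show "p \<in> aztec_diamond n \<longleftrightarrow> p \<in> mirror_x (mirror_y (triangle n))"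
    unfolding p aztec_diamond_mem mirror_x_def mirror_y_def flip_x_def flip_y_def triangle_def
    by (cases "0 \<le> a"; cases "0 \<le> b"; simp add: abs_if; arith)
qed

lemma triangle_0: "triangle 0 = {}"
  by (auto simp: triangle_def)

lemma triangle_add_3: "triangle (n + 3) = triangle n \<union> band (int n)"
  by (auto simp: triangle_def band_def)

lemma triangle_Int_band: "triangle n \<inter> band (int n) = {}"
  by (auto simp: triangle_def band_def)

lemma card_block2: "card (block2 c) = 4"
proof -
  have "block2 c = {c, (fst c + 1, snd c), (fst c, snd c + 1), (fst c + 1, snd c + 1)}"
    by (auto simp: block2_mem prod_eq_iff)
  then show ?thesis by (simp add: prod_eq_iff)
qed

lemma card_L_tromino: "L_tromino T \<Longrightarrow> card T = 3"
  unfolding L_tromino_def using card_block2 by (auto simp: card_Diff_singleton_if)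

lemma card_cover:
  assumes "is_cover C R"
  shows "card R = 3 * card C"
proof -
  have "pairwise disjnt C" "\<And>T. T \<in> C \<Longrightarrow> L_tromino T" "\<Union>C = R"
    using assms unfolding is_cover_def pairwise_def disjnt_def by auto
  moreover have "finite T" if "L_tromino T" for T
    using card_L_tromino[OF that] by (metis card.infinite zero_neq_numeral)
  ultimately have "card R = (\<Sum>T\<in>C. card T)"
    by (metis card_Union_disjoint)
  also have "\<dots> = (\<Sum>T\<in>C. 3)"
    using \<open>\<And>T. T \<in> C \<Longrightarrow> L_tromino T\<close> card_L_tromino by (intro sum.cong) auto
  finally show ?thesis by simp
qed

lemma finite_triangle: "finite (triangle n)"
  by (rule finite_subset[of _ "{0..int n} \<times> {0..int n}"]) (auto simp: triangle_def)

lemma card_triangle: "2 * card (triangle n) = n * (n + 1)"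
proof (induction n)
  case 0
  then show ?case by (simp add: triangle_0)
next
  case (Suc n)
  define diagonal where "diagonal = (\<lambda>i. (i, int n - i)) ` {0..int n}"
  have "triangle (Suc n) = triangle n \<union> diagonal"
    by (auto simp: triangle_def diagonal_def image_iff)
  moreover have "triangle n \<inter> diagonal = {}"
    by (auto simp: triangle_def diagonal_def)
  moreover have "card diagonal = Suc n"
    unfolding diagonal_def by (subst card_image) (auto simp: inj_on_def)
  ultimately have "card (triangle (Suc n)) = card (triangle n) + Suc n"
    by (simp add: card_Un_disjoint finite_triangle diagonal_def)
  with Suc.IH show ?case by simp
qed

lemma card_aztec_diamond: "card (aztec_diamond n) = 2 * (n * (n + 1))"
proof -
  have quadrant: "triangle n \<subseteq> {p. 0 \<le> fst p}" "triangle n \<subseteq> {p. 0 \<le> snd p}"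
    by (auto simp: triangle_def)
  have "finite (mirror_y (triangle n))"
    using bij_flip_y finite_triangle by (simp add: mirror_y_def bij_def finite_vimageI)
  then have "card (aztec_diamond n) = 2 * card (mirror_y (triangle n))"
    unfolding aztec_diamond_eq_mirror
    using quadrant by (intro card_mirror_x mirror_y_subset_right_half)
  also have "\<dots> = 2 * (2 * card (triangle n))"
    using quadrant finite_triangle by (simp add: card_mirror_y)
  finally show ?thesis by (simp add: card_triangle)
qed

lemma tileable_band_odd: "tileable (band (2 * int k - 1))"
proof (induction k)
  case 0
  have "band (2 * int 0 - 1) = block2 (0, 0) - {(1, 1)}"
    by (auto simp: band_def block2_mem)
  then show ?case by (simp add: tileable_block2_Diff block2_mem)
next
  case (Suc k)
  define m where "m = 2 * int k - 1"
  have "m \<ge> - 1" by (simp add: m_def)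
  have "band (2 * int (Suc k) - 1) =
      (shift 0 (- 2) -` band m \<union> (block2 (m + 3, 0) - {(m + 4, 1)}))
      \<union> (block2 (m + 1, 0) - {(m + 1, 0)})"
    unfolding m_def by (auto simp: band_def block2_mem shift_def)
  moreover have "tileable (shift 0 (- 2) -` band m)"
    using Suc.IH unfolding m_def by (rule tileable_vimage_shift)
  ultimately show ?case
    using \<open>m \<ge> - 1\<close>
    by (auto simp: band_def block2_mem shift_def
        intro!: tileable_Un tileable_block2_Diff)
qed

lemma tileable_mirror_x_Un:
  assumes "tileable (mirror_x A)" "tileable (mirror_x B)"
    and "A \<inter> B = {}" "A \<union> B \<subseteq> {p. 0 \<le> fst p}"
  shows "tileable (mirror_x (A \<union> B))"
  unfolding mirror_x_Un using assms by (intro tileable_Un mirror_x_disjoint)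

lemma tileable_mirror_y_Un:
  assumes "tileable (mirror_y A)" "tileable (mirror_y B)"
    and "A \<inter> B = {}" "A \<union> B \<subseteq> {p. 0 \<le> snd p}"
  shows "tileable (mirror_y (A \<union> B))"
  unfolding mirror_y_Un using assms by (intro tileable_Un mirror_y_disjoint)

lemma tileable_mirror_y_row:
  "tileable (mirror_y {p. c \<le> fst p \<and> fst p \<le> c + 2 \<and> snd p = 0})"
proof -
  have "mirror_y {p. c \<le> fst p \<and> fst p \<le> c + 2 \<and> snd p = 0} =
      (block2 (c, - 1) - {(c + 1, - 1)}) \<union> (block2 (c + 1, - 1) - {(c + 1, 0)})"
    by (auto simp: mirror_y_def flip_y_def block2_mem)
  then show ?thesis
    by (auto simp: block2_mem intro!: tileable_Un tileable_block2_Diff)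
qed

lemma tileable_mirror_x_column:
  "tileable (mirror_x {p. fst p = 0 \<and> d \<le> snd p \<and> snd p \<le> d + 2})"
proof -
  have "mirror_x {p. fst p = 0 \<and> d \<le> snd p \<and> snd p \<le> d + 2} =
      (block2 (- 1, d) - {(0, d + 1)}) \<union> (block2 (- 1, d + 1) - {(- 1, d + 1)})"
    by (auto simp: mirror_x_def flip_x_def block2_mem)
  then show ?thesis
    by (auto simp: block2_mem intro!: tileable_Un tileable_block2_Diff)
qed

lemma tileable_mirror_band_even:
  assumes "even n"
  shows "tileable (mirror_x (mirror_y (band (int n))))"
proof -
  obtain k where n: "n = 2 * k" using assms by blast
  define X where "X = shift 0 (- 1) -` band (int n - 1)"
  define R :: "cell set" where "R = {p. int n \<le> fst p \<and> fst p \<le> int n + 2 \<and> snd p = 0}"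
  have band: "band (int n) = X \<union> R"
    by (auto simp: X_def R_def shift_def band_def)
  have "tileable X"
    unfolding X_def using tileable_band_odd[of k] by (intro tileable_vimage_shift) (simp add: n)
  then have "tileable (mirror_y X)"
    by (rule tileable_mirror_y) (auto simp: X_def shift_def band_def)
  then have "tileable (mirror_y (band (int n)))"
    unfolding band R_def
    by (intro tileable_mirror_y_Un tileable_mirror_y_row) (auto simp: X_def shift_def band_def)
  then show ?thesis
    by (rule tileable_mirror_x) (auto simp: mirror_y_def flip_y_def band_def)
qed

lemma tileable_mirror_band_odd:
  assumes "odd n"
  shows "tileable (mirror_x (mirror_y (band (int n))))"
proof -
  obtain k where n: "n = 2 * k + 1" using assms oddE by blast
  define X where "X = shift (- 1) (- 1) -` band (int n - 2)"
  define R :: "cell set" where "R = {p. int n \<le> fst p \<and> fst p \<le> int n + 2 \<and> snd p = 0}"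
  define C :: "cell set" where "C = {p. fst p = 0 \<and> int n \<le> snd p \<and> snd p \<le> int n + 2}"
  have band: "band (int n) = (X \<union> R) \<union> C"
    using n by (auto simp: X_def R_def C_def shift_def band_def)
  have "tileable X"
    unfolding X_def using tileable_band_odd[of k] by (intro tileable_vimage_shift) (simp add: n)
  then have "tileable (mirror_y X)"
    by (rule tileable_mirror_y) (auto simp: X_def shift_def band_def)
  then have "tileable (mirror_y (X \<union> R))"
    unfolding R_def
    by (intro tileable_mirror_y_Un tileable_mirror_y_row) (auto simp: X_def shift_def band_def)
  then have "tileable (mirror_x (mirror_y (X \<union> R)))"
    by (rule tileable_mirror_x) (auto simp: mirror_y_def flip_y_def X_def R_def shift_def band_def)
  moreover have "tileable (mirror_x (mirror_y C))"
    unfolding mirror_x_mirror_y_commute C_def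
    by (rule tileable_mirror_y[OF tileable_mirror_x_column]) (auto simp: mirror_x_def flip_x_def)
  moreover have "mirror_y (X \<union> R) \<inter> mirror_y C = {}"
    using n by (auto simp: mirror_y_def flip_y_def X_def R_def C_def shift_def band_def)
  moreover have "mirror_y (X \<union> R) \<union> mirror_y C \<subseteq> {p. 0 \<le> fst p}"
    by (auto simp: mirror_y_def flip_y_def X_def R_def C_def shift_def band_def)
  ultimately show ?thesis
    unfolding band mirror_y_Un[of "X \<union> R" C] by (rule tileable_mirror_x_Un)
qed

lemma tileable_aztec_diamond_add_3:
  assumes "tileable (aztec_diamond n)"
  shows "tileable (aztec_diamond (n + 3))"
proof -
  have "tileable (mirror_x (mirror_y (band (int n))))"
    using tileable_mirror_band_even tileable_mirror_band_odd by blast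
  moreover have "aztec_diamond n \<inter> mirror_x (mirror_y (band (int n))) = {}"
    unfolding aztec_diamond_eq_mirror
    using triangle_Int_band
    by (intro mirror_x_disjoint mirror_y_disjoint)
      (auto simp: mirror_y_def flip_y_def triangle_def band_def)
  ultimately show ?thesis
    using assms unfolding aztec_diamond_eq_mirror triangle_add_3 mirror_y_Un mirror_x_Un
    by (rule tileable_Un[rotated])
qed

lemma tileable_aztec_diamond_2: "tileable (aztec_diamond 2)"
proof -
  have "triangle 2 = block2 (0, 0) - {(1, 1)}"
    by (auto simp: triangle_def block2_mem)
  then have "tileable (triangle 2)"
    by (simp add: tileable_block2_Diff block2_mem)
  then have "tileable (mirror_y (triangle 2))"
    by (rule tileable_mirror_y) (auto simp: triangle_def)
  then show ?thesis
    unfolding aztec_diamond_eq_mirror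
    by (rule tileable_mirror_x) (auto simp: mirror_y_def flip_y_def triangle_def)
qed

lemma tileable_aztec_diamond: "n mod 3 \<noteq> 1 \<Longrightarrow> tileable (aztec_diamond n)"
proof (induction n rule: less_induct)
  case (less n)
  show ?case
  proof (cases "n < 3")
    case True
    with less.prems have "n = 0 \<or> n = 2" by auto
    then show ?thesis
      using tileable_aztec_diamond_2 tileable_empty
      by (auto simp: aztec_diamond_eq_mirror triangle_0 mirror_x_def mirror_y_def)
  next
    case False
    then obtain m where "n = m + 3" by (metis add.commute le_Suc_ex not_less)
    with less show ?thesis by (simp add: tileable_aztec_diamond_add_3)
  qed
qed

lemma mult_add_1_mod_3_eq_0_iff: "n * (n + 1) mod 3 = 0 \<longleftrightarrow> n mod 3 \<noteq> (1 :: nat)"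
proof -
  have prod: "n * (n + 1) mod 3 = (n mod 3) * ((n + 1) mod 3) mod 3"
    by (simp add: mod_mult_eq)
  have "n mod 3 = 0 \<or> n mod 3 = 1 \<and> (n + 1) mod 3 = 2 \<or> n mod 3 = 2 \<and> (n + 1) mod 3 = 0"
    by presburger
  then show ?thesis
    unfolding prod by (elim disjE conjE) simp_all
qed

theorem corollary1:
  fixes n :: nat
  assumes "n \<ge> 1"
  shows "(\<exists>C. is_cover C (aztec_diamond n)) \<longleftrightarrow> n * (n + 1) mod 3 = 0"
proof
  assume "\<exists>C. is_cover C (aztec_diamond n)"
  then obtain C where "is_cover C (aztec_diamond n)" by blast
  then have "2 * (n * (n + 1)) = 3 * card C"
    by (metis card_cover card_aztec_diamond)
  then show "n * (n + 1) mod 3 = 0" by presburger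
next
  assume "n * (n + 1) mod 3 = 0"
  then have "tileable (aztec_diamond n)"
    by (rule tileable_aztec_diamond[OF mult_add_1_mod_3_eq_0_iff[THEN iffD1]])
  then show "\<exists>C. is_cover C (aztec_diamond n)" unfolding tileable_def .
qed

end
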